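(* Let $d \ge 1$, $p \in [0,1/2)$, $\mathbf{x} \in \mathbb{R}^d$, $G > 0$, $\lambda > 0$. Let measurements $y_k = \langle \mathbf{x}, \mathbf{a}_k\rangle + \epsilon_k$ ($k = 0,1,\dots$) be given, where $\epsilon_k = \xi_k\nu_k$ with $\xi_k$ an indicator equal to $1$ with probability $p$, independent of all other variables, and $\nu_k$ arbitrary (possibly dependent on $\mathbf{x}$ and the measurement vectors). Let $\mathcal{F}_k$ be the $\sigma$-algebra generated by $\{\mathbf{a}_0,\epsilon_0\},\dots,\{\mathbf{a}_{k-1},\epsilon_{k-1}\}$, and assume each $\mathbf{a}_k \in \mathbb{R}^d$ has unit norm and is independent of $\mathcal{F}_k$, the vectors $\sqrt d\,\mathbf{a}_k$ are i.i.d. mean-zero isotropic, and for every $\mathcal{F}_k$-measurable $\mathbf{u}$, $\mathbb{E}_{\mathbf{a}_k}[|\langle \mathbf{u},\mathbf{a}_k\rangle| \mid \mathbf{u}] \ge \widetilde{C}\|\mathbf{u}\|_2/\sqrt d$ for a constant $\widetilde C > 0$. Let $\mathbf{x}_0 = 0$, $\mathbf{x}_{k+1} = \mathbf{x}_k + G\lambda^{-k}\mathrm{sign}(y_k - \langle \mathbf{x}_k,\mathbf{a}_k\rangle)\mathbf{a}_k$, $\mathbf{u}_k := \lambda^k(\mathbf{x} - \mathbf{x}_k)/G$ and $Y_k := \|\mathbf{u}_k\|_2^2$, so that $$Y_{k+1} = \lambda^2\Big\{\|\mathbf{u}_k\|^2 - 2\langle \mathbf{u}_k,\mathbf{a}_k\rangle\,\mathrm{sign}\big(\langle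 \mathbf{u}_k,\mathbf{a}_k\rangle + \lambda^k\epsilon_k/G\big) + 1\Big\}.$$ Suppose $$1 < \lambda^2 \le 1 + \widetilde{C}^2\frac{(1-2p)^2}{9d} < \frac{50}{49},$$ and set $a = \frac{1}{2(\lambda^2-1)}$, $\eta = c^*\sqrt{\lambda^2-1}$ with $$c^* = \frac{1}{8\lambda^2}\Big[\frac{\sqrt2\,\lambda^2(1-2p)\widetilde C}{\sqrt d} - \sqrt{\lambda^2-1}\Big(\frac32 + \lambda^2\Big)\Big].$$ Then $$\mathbb{E}\big[e^{\eta(Y_{k+1} - a)}\mathbb{1}_{\{Y_k \le a\}} \mid \mathcal{F}_k\big] \le \exp\Big\{\frac{\widetilde C(1-2p)}{3\sqrt d}\Big\}.$$
   Context: $\mathrm{sign}$ is the sign function. *)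

theory Defs
  imports "HOL-Probability.Probability"
begin

definition gen_sets :: "'a measure \<Rightarrow> ('a \<Rightarrow> 'b::topological_space) \<Rightarrow> 'a set set" where
  "gen_sets M X = {X -` B \<inter> space M | B. B \<in> sets borel}"

definition noise :: "(nat \<Rightarrow> 'a \<Rightarrow> real) \<Rightarrow> (nat \<Rightarrow> 'a \<Rightarrow> real) \<Rightarrow> nat \<Rightarrow> 'a \<Rightarrow> real" where
  "noise \<xi> \<nu> k \<omega> = \<xi> k \<omega> * \<nu> k \<omega>"

definition filt :: "'a measure \<Rightarrow> (nat \<Rightarrow> 'a \<Rightarrow> real^'d) \<Rightarrow> (nat \<Rightarrow> 'a \<Rightarrow> real)
    \<Rightarrow> (nat \<Rightarrow> 'a \<Rightarrow> real) \<Rightarrow> nat \<Rightarrow> 'a measure" where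
  "filt M A \<xi> \<nu> k = sigma (space M) (\<Union>j<k. gen_sets M (A j) \<union> gen_sets M (noise \<xi> \<nu> j))"

definition meas :: "real^'d \<Rightarrow> (nat \<Rightarrow> 'a \<Rightarrow> real^'d) \<Rightarrow> (nat \<Rightarrow> 'a \<Rightarrow> real)
    \<Rightarrow> (nat \<Rightarrow> 'a \<Rightarrow> real) \<Rightarrow> nat \<Rightarrow> 'a \<Rightarrow> real" where
  "meas x A \<xi> \<nu> k \<omega> = x \<bullet> A k \<omega> + noise \<xi> \<nu> k \<omega>"

primrec xseq :: "real^'d \<Rightarrow> (nat \<Rightarrow> 'a \<Rightarrow> real^'d) \<Rightarrow> (nat \<Rightarrow> 'a \<Rightarrow> real)
    \<Rightarrow> (nat \<Rightarrow> 'a \<Rightarrow> real) \<Rightarrow> real \<Rightarrow> real \<Rightarrow> nat \<Rightarrow> 'a \<Rightarrow> real^'d" where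
  "xseq x A \<xi> \<nu> G lam 0 \<omega> = 0"
| "xseq x A \<xi> \<nu> G lam (Suc k) \<omega> =
     xseq x A \<xi> \<nu> G lam k \<omega> +
     (G * inverse (lam ^ k) * sgn (meas x A \<xi> \<nu> k \<omega> - xseq x A \<xi> \<nu> G lam k \<omega> \<bullet> A k \<omega>)) *\<^sub>R A k \<omega>"

definition useq :: "real^'d \<Rightarrow> (nat \<Rightarrow> 'a \<Rightarrow> real^'d) \<Rightarrow> (nat \<Rightarrow> 'a \<Rightarrow> real)
    \<Rightarrow> (nat \<Rightarrow> 'a \<Rightarrow> real) \<Rightarrow> real \<Rightarrow> real \<Rightarrow> nat \<Rightarrow> 'a \<Rightarrow> real^'d" where
  "useq x A \<xi> \<nu> G lam k \<omega> = (lam ^ k / G) *\<^sub>R (x - xseq x A \<xi> \<nu> G lam k \<omega>)"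

definition Yseq :: "real^'d \<Rightarrow> (nat \<Rightarrow> 'a \<Rightarrow> real^'d) \<Rightarrow> (nat \<Rightarrow> 'a \<Rightarrow> real)
    \<Rightarrow> (nat \<Rightarrow> 'a \<Rightarrow> real) \<Rightarrow> real \<Rightarrow> real \<Rightarrow> nat \<Rightarrow> 'a \<Rightarrow> real" where
  "Yseq x A \<xi> \<nu> G lam k \<omega> = (norm (useq x A \<xi> \<nu> G lam k \<omega>))\<^sup>2"

definition cstar :: "real \<Rightarrow> real \<Rightarrow> real \<Rightarrow> real \<Rightarrow> real" where
  "cstar lam p C d = 1 / (8 * lam\<^sup>2) *
     (sqrt 2 * lam\<^sup>2 * (1 - 2 * p) * C / sqrt d - sqrt (lam\<^sup>2 - 1) * (3 / 2 + lam\<^sup>2))"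

end

theory Submission
  imports Defs
begin

text \<open>
  On the event \<open>Y\<^sub>k \<le> a\<close> we have \<open>\<parallel>u\<^sub>k\<parallel> \<le> \<surd>a\<close>, and one step of the iteration moves \<open>u\<^sub>k\<close> to
  \<open>\<lambda>u\<^sub>k \<plusminus> \<lambda>a\<^sub>k\<close> with \<open>\<parallel>a\<^sub>k\<parallel> = 1\<close>, so \<open>Y\<^sub>k\<^sub>+\<^sub>1 \<le> \<lambda>\<^sup>2(\<surd>a + 1)\<^sup>2\<close> surely. Hence the random variable
  under the conditional expectation is bounded pointwise by \<open>exp(\<eta>(\<lambda>\<^sup>2(\<surd>a + 1)\<^sup>2 - a))\<close>, and the
  choice of \<open>a\<close> and \<open>\<eta>\<close> together with \<open>\<lambda>\<^sup>2 - 1 \<le> (C(1 - 2p)/(3\<surd>d))\<^sup>2\<close> makes this exponent at most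
  \<open>C(1 - 2p)/(3\<surd>d)\<close>. No property of the distribution of the noise or of the measurement vectors
  beyond \<open>\<parallel>a\<^sub>k\<parallel> = 1\<close> is needed.
\<close>

lemma (in finite_measure) real_cond_exp_le_bound:
  assumes "subalgebra M F" "f \<in> borel_measurable M" "\<And>x. x \<in> space M \<Longrightarrow> \<bar>f x\<bar> \<le> B"
  shows "AE x in M. real_cond_exp M F f x \<le> B"
proof -
  interpret finite_measure_subalgebra M F by unfold_locales fact
  have "integrable M f"
    by (rule integrable_const_bound[where B = B]) (use assms in auto)
  moreover have "AE x in M. f x \<le> B"
    using assms(3) by (intro AE_I2) (auto dest: abs_le_D1)
  ultimately show ?thesis
    by (rule real_cond_exp_le_c)
qed

lemma gen_sets_subset_sets:
  assumes "X \<in> borel_measurable M"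
  shows "gen_sets M X \<subseteq> sets M"
  using assms unfolding gen_sets_def by (auto intro: measurable_sets)

lemma subalgebra_filt:
  assumes [measurable]: "\<And>j. A j \<in> borel_measurable M" "\<And>j. \<xi> j \<in> borel_measurable M"
    "\<And>j. \<nu> j \<in> borel_measurable M"
  shows "subalgebra M (filt M A \<xi> \<nu> k)"
proof -
  have "noise \<xi> \<nu> j \<in> borel_measurable M" for j
    unfolding noise_def[abs_def] by measurable
  then have "gen_sets M (A j) \<union> gen_sets M (noise \<xi> \<nu> j) \<subseteq> sets M" for j
    by (intro Un_least gen_sets_subset_sets) (simp_all add: assms(1))
  then have generators: "(\<Union>j<k. gen_sets M (A j) \<union> gen_sets M (noise \<xi> \<nu> j)) \<subseteq> sets M"
    by (rule UN_least)
  moreover have "sets M \<subseteq> Pow (space M)"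
    by (rule sets.space_closed)
  ultimately show ?thesis
    unfolding subalgebra_def filt_def using sets.sigma_sets_subset[OF generators] by simp
qed

lemma xseq_measurable:
  assumes [measurable]: "\<And>j. A j \<in> borel_measurable M" "\<And>j. \<xi> j \<in> borel_measurable M"
    "\<And>j. \<nu> j \<in> borel_measurable M"
  shows "xseq x A \<xi> \<nu> G lam k \<in> borel_measurable M"
proof (induction k)
  case 0
  then show ?case by simp
next
  case (Suc k)
  note [measurable] = Suc
  show ?case unfolding xseq.simps meas_def noise_def by measurable
qed

lemma Yseq_measurable:
  assumes "\<And>j. A j \<in> borel_measurable M" "\<And>j. \<xi> j \<in> borel_measurable M"
    "\<And>j. \<nu> j \<in> borel_measurable M"
  shows "Yseq x A \<xi> \<nu> G lam k \<in> borel_measurable M"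
proof -
  note [measurable] = xseq_measurable[OF assms]
  show ?thesis unfolding Yseq_def[abs_def] useq_def by measurable
qed

lemma useq_Suc:
  assumes "G > 0" "lam > 0"
  shows "useq x A \<xi> \<nu> G lam (Suc k) \<omega> = lam *\<^sub>R useq x A \<xi> \<nu> G lam k \<omega>
     - (lam * sgn (meas x A \<xi> \<nu> k \<omega> - xseq x A \<xi> \<nu> G lam k \<omega> \<bullet> A k \<omega>)) *\<^sub>R A k \<omega>"
proof -
  define sg where "sg = sgn (meas x A \<xi> \<nu> k \<omega> - xseq x A \<xi> \<nu> G lam k \<omega> \<bullet> A k \<omega>)"
  define xk where "xk = xseq x A \<xi> \<nu> G lam k \<omega>"
  have step: "lam ^ Suc k / G * (G * inverse (lam ^ k) * sg) = lam * sg"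
    using assms by (simp add: field_simps)
  have "useq x A \<xi> \<nu> G lam (Suc k) \<omega>
      = (lam ^ Suc k / G) *\<^sub>R (x - xk) - (lam ^ Suc k / G * (G * inverse (lam ^ k) * sg)) *\<^sub>R A k \<omega>"
    unfolding useq_def xseq.simps sg_def xk_def by (simp add: algebra_simps)
  also have "\<dots> = lam *\<^sub>R useq x A \<xi> \<nu> G lam k \<omega> - (lam * sg) *\<^sub>R A k \<omega>"
    unfolding step useq_def xk_def by (simp add: algebra_simps)
  finally show ?thesis
    unfolding sg_def .
qed

lemma norm_useq_Suc_le:
  assumes "G > 0" "lam > 0" "norm (A k \<omega>) = 1"
  shows "norm (useq x A \<xi> \<nu> G lam (Suc k) \<omega>) \<le> lam * (norm (useq x A \<xi> \<nu> G lam k \<omega>) + 1)"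
proof -
  define u where "u = useq x A \<xi> \<nu> G lam k \<omega>"
  define sg where "sg = sgn (meas x A \<xi> \<nu> k \<omega> - xseq x A \<xi> \<nu> G lam k \<omega> \<bullet> A k \<omega>)"
  have "\<bar>sg\<bar> \<le> 1"
    unfolding sg_def by (simp add: sgn_real_def)
  then have "norm ((lam * sg) *\<^sub>R A k \<omega>) \<le> lam"
    using assms(2,3) by (simp add: abs_mult)
  moreover have "norm (useq x A \<xi> \<nu> G lam (Suc k) \<omega>) \<le> norm (lam *\<^sub>R u) + norm ((lam * sg) *\<^sub>R A k \<omega>)"
    unfolding useq_Suc[OF assms(1,2)] u_def sg_def by (rule norm_triangle_ineq4)
  ultimately show ?thesis
    using assms(2) by (simp add: u_def distrib_left)
qed

lemma Yseq_Suc_le: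
  assumes "G > 0" "lam > 0" "norm (A k \<omega>) = 1" "Yseq x A \<xi> \<nu> G lam k \<omega> \<le> a"
  shows "Yseq x A \<xi> \<nu> G lam (Suc k) \<omega> \<le> lam\<^sup>2 * (sqrt a + 1)\<^sup>2"
proof -
  have "norm (useq x A \<xi> \<nu> G lam k \<omega>) \<le> sqrt a"
    using assms(4) by (intro real_le_rsqrt) (simp add: Yseq_def)
  have "norm (useq x A \<xi> \<nu> G lam (Suc k) \<omega>) \<le> lam * (norm (useq x A \<xi> \<nu> G lam k \<omega>) + 1)"
    using assms(1-3) by (rule norm_useq_Suc_le)
  also have "\<dots> \<le> lam * (sqrt a + 1)"
    using \<open>norm (useq x A \<xi> \<nu> G lam k \<omega>) \<le> sqrt a\<close> assms(2) by (intro mult_left_mono) auto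
  finally show ?thesis
    unfolding Yseq_def by (metis norm_ge_zero power_mono power_mult_distrib)
qed

lemma exp_Yseq_Suc_indicator_le:
  assumes "G > 0" "lam > 0" "norm (A k \<omega>) = 1"
    and "0 \<le> \<eta>" "\<eta> * (lam\<^sup>2 * (sqrt a + 1)\<^sup>2 - a) \<le> b"
  shows "\<bar>exp (\<eta> * (Yseq x A \<xi> \<nu> G lam (Suc k) \<omega> - a))
           * indicator {\<omega>' \<in> S. Yseq x A \<xi> \<nu> G lam k \<omega>' \<le> a} \<omega>\<bar> \<le> exp b"
proof (cases "Yseq x A \<xi> \<nu> G lam k \<omega> \<le> a")
  case True
  have "Yseq x A \<xi> \<nu> G lam (Suc k) \<omega> \<le> lam\<^sup>2 * (sqrt a + 1)\<^sup>2"
    using assms(1-3) True by (rule Yseq_Suc_le)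
  then have "\<eta> * (Yseq x A \<xi> \<nu> G lam (Suc k) \<omega> - a) \<le> \<eta> * (lam\<^sup>2 * (sqrt a + 1)\<^sup>2 - a)"
    using assms(4) by (intro mult_left_mono) auto
  then have "\<eta> * (Yseq x A \<xi> \<nu> G lam (Suc k) \<omega> - a) \<le> b"
    using assms(5) by linarith
  then show ?thesis
    by (simp add: indicator_def)
qed (simp add: indicator_def)

text \<open>Here \<open>c\<close> is \<open>cstar\<close> written in terms of \<open>L = \<lambda>\<^sup>2\<close> and \<open>q = (1 - 2p)C/\<surd>d\<close>.\<close>

lemma cstar_shape_bounds:
  fixes L q :: real
  defines "s \<equiv> sqrt (L - 1)" and "c \<equiv> (sqrt 2 * L * q - sqrt (L - 1) * (3/2 + L)) / (8 * L)"
  assumes q: "0 < q" and L: "1 < L" "L \<le> 1 + (q/3)\<^sup>2" "1 + (q/3)\<^sup>2 < 50/49"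
  shows "0 \<le> c" and "c * s * (1/2 + L) + sqrt 2 * L * c \<le> q/3"
proof -
  have "s \<le> sqrt ((q/3)\<^sup>2)"
    unfolding s_def using L(2) by (intro real_sqrt_le_mono) simp
  then have s_le: "s \<le> q/3"
    using q by simp
  have "(q/3)\<^sup>2 < (1/7)\<^sup>2"
    using L(3) by (simp add: power2_eq_square)
  then have q_less: "q < 3/7"
    by (auto dest: power_less_imp_less_base)
  have s0: "0 \<le> s"
    unfolding s_def using L(1) by simp
  have sqrt2_lower: "7/5 \<le> sqrt 2"
    by (rule real_le_rsqrt) (simp add: power2_eq_square)
  have sqrt2_upper: "sqrt 2 \<le> 17/12"
    by (rule real_le_lsqrt) (simp_all add: power2_eq_square)
  have "7/5 * L \<le> sqrt 2 * L"
    using sqrt2_lower L(1) by (intro mult_right_mono) auto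
  moreover have "(3/2 + L) / 3 \<le> 7/5 * L"
    using L(1) by simp
  ultimately have "(3/2 + L) / 3 \<le> sqrt 2 * L"
    by linarith
  have "s * (3/2 + L) \<le> q/3 * (3/2 + L)"
    using s_le L(1) by (intro mult_right_mono) auto
  also have "\<dots> = q * ((3/2 + L) / 3)"
    by simp
  also have "\<dots> \<le> q * (sqrt 2 * L)"
    using \<open>(3/2 + L) / 3 \<le> sqrt 2 * L\<close> q by (intro mult_left_mono) auto
  finally have "s * (3/2 + L) \<le> sqrt 2 * L * q"
    by (simp add: ac_simps)
  then show c0: "0 \<le> c"
    unfolding c_def s_def[symmetric] using L(1) by simp
  have "c \<le> sqrt 2 * L * q / (8 * L)"
    unfolding c_def s_def[symmetric] using s0 L(1) by (intro divide_right_mono) auto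
  then have c_le: "c \<le> sqrt 2 * q / 8"
    using L(1) by simp
  have "q/3 * (1/2 + L) \<le> 1/7 * (1/2 + 50/49)"
    using q_less L q by (intro mult_mono) auto
  moreover have "sqrt 2 * L \<le> 17/12 * (50/49)"
    using sqrt2_upper L by (intro mult_mono) auto
  ultimately have factor_le: "q/3 * (1/2 + L) + sqrt 2 * L \<le> 5/3"
    by simp
  have "c * s * (1/2 + L) + sqrt 2 * L * c = c * (s * (1/2 + L) + sqrt 2 * L)"
    by (simp add: algebra_simps)
  also have "\<dots> \<le> sqrt 2 * q / 8 * (q/3 * (1/2 + L) + sqrt 2 * L)"
    using c_le c0 s_le s0 L(1) q by (intro mult_mono add_mono mult_right_mono) auto
  also have "\<dots> \<le> 17/12 * q / 8 * (5/3)"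
    using sqrt2_upper factor_le q L(1) by (intro mult_mono) auto
  also have "\<dots> \<le> q/3"
    using q by simp
  finally show "c * s * (1/2 + L) + sqrt 2 * L * c \<le> q/3" .
qed

text \<open>The radius \<open>\<surd>a\<close> is chosen so that \<open>\<surd>(L - 1) \<surd>a = 1/\<surd>2\<close>.\<close>

lemma exponent_at_radius_eq:
  fixes L :: real
  defines "a \<equiv> 1 / (2 * (L - 1))"
  assumes "1 < L"
  shows "sqrt (L - 1) * (L * (sqrt a + 1)\<^sup>2 - a) = sqrt (L - 1) * (1/2 + L) + sqrt 2 * L"
proof -
  have half: "(L - 1) * a = 1/2"
    unfolding a_def using assms(2) by simp
  have "0 \<le> a"
    unfolding a_def using assms(2) by simp
  have "sqrt (L - 1) * sqrt a = sqrt (1/2)"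
    by (metis half real_sqrt_mult)
  also have "\<dots> = 1 / sqrt 2"
    by (simp add: real_sqrt_divide)
  finally have "2 * L * (sqrt (L - 1) * sqrt a) = L * (2 / sqrt 2)"
    by simp
  also have "\<dots> = sqrt 2 * L"
    using real_div_sqrt[of 2] by simp
  finally have "2 * L * (sqrt (L - 1) * sqrt a) = sqrt 2 * L" .
  moreover have "L * (sqrt a + 1)\<^sup>2 - a = (L - 1) * a + 2 * L * sqrt a + L"
    using \<open>0 \<le> a\<close> by (simp add: power2_eq_square algebra_simps)
  ultimately show ?thesis
    unfolding half by (simp add: algebra_simps)
qed

lemma cstar_exponent_bound:
  fixes lam p C d :: real
  defines "a \<equiv> 1 / (2 * (lam\<^sup>2 - 1))"
  assumes "0 < d" "p < 1/2" "0 < C"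
    and "1 < lam\<^sup>2" "lam\<^sup>2 \<le> 1 + C\<^sup>2 * (1 - 2 * p)\<^sup>2 / (9 * d)"
    "1 + C\<^sup>2 * (1 - 2 * p)\<^sup>2 / (9 * d) < 50 / 49"
  shows "0 \<le> cstar lam p C d"
    and "cstar lam p C d * sqrt (lam\<^sup>2 - 1) * (lam\<^sup>2 * (sqrt a + 1)\<^sup>2 - a)
           \<le> C * (1 - 2 * p) / (3 * sqrt d)"
proof -
  define q where "q = (1 - 2 * p) * C / sqrt d"
  have q0: "0 < q"
    unfolding q_def using assms(2-4) by simp
  have "C\<^sup>2 * (1 - 2 * p)\<^sup>2 / (9 * d) = (q/3)\<^sup>2"
    unfolding q_def using assms(2) by (simp add: field_simps power2_eq_square)
  then have bounds: "0 \<le> cstar lam p C d"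
    "cstar lam p C d * sqrt (lam\<^sup>2 - 1) * (1/2 + lam\<^sup>2) + sqrt 2 * lam\<^sup>2 * cstar lam p C d \<le> q/3"
    using cstar_shape_bounds[of q "lam\<^sup>2"] q0 assms(5-7)
    unfolding cstar_def q_def by (simp_all add: field_simps)
  then show "0 \<le> cstar lam p C d"
    by simp
  have "cstar lam p C d * sqrt (lam\<^sup>2 - 1) * (lam\<^sup>2 * (sqrt a + 1)\<^sup>2 - a)
      = cstar lam p C d * (sqrt (lam\<^sup>2 - 1) * (1/2 + lam\<^sup>2) + sqrt 2 * lam\<^sup>2)"
    unfolding a_def using exponent_at_radius_eq[OF assms(5)] by simp
  also have "\<dots> \<le> q/3"
    using bounds(2) by (simp add: algebra_simps)
  finally show "cstar lam p C d * sqrt (lam\<^sup>2 - 1) * (lam\<^sup>2 * (sqrt a + 1)\<^sup>2 - a)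
      \<le> C * (1 - 2 * p) / (3 * sqrt d)"
    unfolding q_def by (simp add: mult.commute)
qed

theorem lemma4p2:
  fixes M :: "'a measure"
    and x :: "real^'d"
    and A :: "nat \<Rightarrow> 'a \<Rightarrow> real^'d"
    and \<xi> \<nu> :: "nat \<Rightarrow> 'a \<Rightarrow> real"
    and p G lam C :: real
    and k :: nat
  defines "d \<equiv> real CARD('d)"
  assumes M: "prob_space M"
    and p: "0 \<le> p" "p < 1/2"
    and G: "G > 0" and lam: "lam > 0"
    and C: "C > 0"
    and \<xi>_meas: "\<And>j. \<xi> j \<in> borel_measurable M"
    and \<xi>_vals: "\<And>j \<omega>. \<omega> \<in> space M \<Longrightarrow> \<xi> j \<omega> \<in> {0, 1}"
    and \<xi>_prob: "\<And>j. measure M {\<omega> \<in> space M. \<xi> j \<omega> = 1} = p"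
    and \<xi>_indep: "prob_space.indep_sets M
        (\<lambda>i. case i of
            None \<Rightarrow> sigma_sets (space M) (\<Union>j. gen_sets M (A j) \<union> gen_sets M (\<nu> j))
          | Some j \<Rightarrow> sigma_sets (space M) (gen_sets M (\<xi> j))) UNIV"
    and \<nu>_meas: "\<And>j. \<nu> j \<in> borel_measurable M"
    and A_meas: "\<And>j. A j \<in> borel_measurable M"
    and A_unit: "\<And>j \<omega>. \<omega> \<in> space M \<Longrightarrow> norm (A j \<omega>) = 1"
    and A_indep_F: "\<And>j. prob_space.indep_set M (sigma_sets (space M) (gen_sets M (A j)))
                          (sets (filt M A \<xi> \<nu> j))"
    and A_iid_indep: "prob_space.indep_vars M (\<lambda>_. borel) (\<lambda>j \<omega>. sqrt d *\<^sub>R A j \<omega>) UNIV"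
    and A_iid_distr: "\<And>j. distr M borel (\<lambda>\<omega>. sqrt d *\<^sub>R A j \<omega>) = distr M borel (\<lambda>\<omega>. sqrt d *\<^sub>R A 0 \<omega>)"
    and A_mean0: "\<And>j i. integral\<^sup>L M (\<lambda>\<omega>. sqrt d * (A j \<omega> $ i)) = 0"
    and A_isotropic: "\<And>j i i'. integral\<^sup>L M (\<lambda>\<omega>. (sqrt d * (A j \<omega> $ i)) * (sqrt d * (A j \<omega> $ i')))
                              = (if i = i' then 1 else 0)"
    and A_smallball: "\<And>j u. u \<in> borel_measurable (filt M A \<xi> \<nu> j) \<Longrightarrow>
        AE \<omega> in M. (\<integral>v. \<bar>u \<omega> \<bullet> v\<bar> \<partial>(distr M borel (A j))) \<ge> C * norm (u \<omega>) / sqrt d"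
    and lam_bounds: "1 < lam\<^sup>2" "lam\<^sup>2 \<le> 1 + C\<^sup>2 * (1 - 2 * p)\<^sup>2 / (9 * d)"
                    "1 + C\<^sup>2 * (1 - 2 * p)\<^sup>2 / (9 * d) < 50 / 49"
  shows "AE \<omega> in M.
     real_cond_exp M (filt M A \<xi> \<nu> k)
       (\<lambda>\<omega>'. exp (cstar lam p C d * sqrt (lam\<^sup>2 - 1) *
                   (Yseq x A \<xi> \<nu> G lam (Suc k) \<omega>' - 1 / (2 * (lam\<^sup>2 - 1))))
             * indicator {\<omega>'' \<in> space M. Yseq x A \<xi> \<nu> G lam k \<omega>'' \<le> 1 / (2 * (lam\<^sup>2 - 1))} \<omega>') \<omega>
     \<le> exp (C * (1 - 2 * p) / (3 * sqrt d))"
proof -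
  interpret prob_space M by (rule M)
  define a where "a = 1 / (2 * (lam\<^sup>2 - 1))"
  define \<eta> where "\<eta> = cstar lam p C d * sqrt (lam\<^sup>2 - 1)"
  define B where "B = C * (1 - 2 * p) / (3 * sqrt d)"
  have "0 < d"
    unfolding d_def by simp
  note cstar_bounds = cstar_exponent_bound[OF this p(2) C lam_bounds]
  have "0 \<le> \<eta>"
    unfolding \<eta>_def using cstar_bounds(1) lam_bounds(1) by simp
  moreover have "\<eta> * (lam\<^sup>2 * (sqrt a + 1)\<^sup>2 - a) \<le> B"
    unfolding \<eta>_def a_def B_def by (rule cstar_bounds(2))
  ultimately have integrand_bounded: "\<bar>exp (\<eta> * (Yseq x A \<xi> \<nu> G lam (Suc k) \<omega> - a))
      * indicator {\<omega>' \<in> space M. Yseq x A \<xi> \<nu> G lam k \<omega>' \<le> a} \<omega>\<bar> \<le> exp B"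
    if "\<omega> \<in> space M" for \<omega>
    using G lam A_unit[OF that] by (intro exp_Yseq_Suc_indicator_le)
  note [measurable] = Yseq_measurable[OF A_meas \<xi>_meas \<nu>_meas]
  have "AE \<omega> in M. real_cond_exp M (filt M A \<xi> \<nu> k)
      (\<lambda>\<omega>. exp (\<eta> * (Yseq x A \<xi> \<nu> G lam (Suc k) \<omega> - a))
        * indicator {\<omega>' \<in> space M. Yseq x A \<xi> \<nu> G lam k \<omega>' \<le> a} \<omega>) \<omega> \<le> exp B"
    by (rule real_cond_exp_le_bound[OF subalgebra_filt[OF A_meas \<xi>_meas \<nu>_meas]])
      (measurable, fact integrand_bounded)
  then show ?thesis
    unfolding \<eta>_def a_def B_def .
qed

end
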